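(* Let $u_1,\dots,u_m\in\mathbb{R}^d$ and let $F_i(x)=\frac12\|x-u_i\|^2$, so $F(x)=\frac1m\sum_{i=1}^m F_i(x)$ has unique minimizer $x^\star=\frac1m\sum_i u_i$. Run FedAvg (as described in the context) with exact local gradients, initial point $x^0=0$, constant learning rate $\eta\in(0,1)$, $s\ge1$ local steps, and time-invariant link probabilities $p_i^t=p_i\in(0,1]$ for all $t$. Then $$\lim_{T\to\infty}\mathbb{E}[x^T]=\sum_{i=1}^m\frac{p_i u_i\left[1+\sum_{j=2}^m(-1)^{j+1}\frac1j\sum_{S\in\mathcal{B}^i_j}\prod_{z\in S}p_z\right]}{1-\prod_{l=1}^m(1-p_l)},$$ where $\mathcal{B}^i_j=\{S\subseteq[m]\setminus\{i\}:\ |S|=j-1\}$.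
   Context: FedAvg with unreliable uplinks: there are $m$ clients and a server holding $x^t$. In each round $t$, client $i$'s uplink is active with probability $p_i^t$, independently across clients and rounds; $\mathcal{A}^t$ is the set of clients with active uplinks. Each client starts from the current server model $x^t$ and performs $s$ steps of gradient descent with exact gradients, $y_{k+1}=y_k-\eta\nabla F_i(y_k)$, $y_0=x^t$, obtaining $y_s^{(i)}$. If $\mathcal{A}^t\neq\emptyset$ the server sets $x^{t+1}=\frac{1}{|\mathcal{A}^t|}\sum_{i\in\mathcal{A}^t}y_s^{(i)}$; otherwise $x^{t+1}=x^t$. *)

theory Defs
  imports "HOL-Probability.Probability"
begin

text \<open>Clients are indexed by 1..m. Local update of client i: s steps of exact gradient
  descent with step size eta, started at the server model x; grad i is the gradient of F_i.\<close>
definition local_gd :: "real \<Rightarrow> nat \<Rightarrow> (nat \<Rightarrow> 'a::real_vector \<Rightarrow> 'a) \<Rightarrow> nat \<Rightarrow> 'a \<Rightarrow> 'a" where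
  "local_gd eta s grad i x = ((\<lambda>y. y - eta *\<^sub>R grad i y) ^^ s) x"

definition server_step :: "real \<Rightarrow> nat \<Rightarrow> (nat \<Rightarrow> 'a::real_vector \<Rightarrow> 'a) \<Rightarrow> 'a \<Rightarrow> nat set \<Rightarrow> 'a" where
  "server_step eta s grad x A =
     (if A = {} then x else (1 / real (card A)) *\<^sub>R (\<Sum>i\<in>A. local_gd eta s grad i x))"

definition active_pmf :: "nat \<Rightarrow> (nat \<Rightarrow> real) \<Rightarrow> nat set pmf" where
  "active_pmf m p = map_pmf (\<lambda>b. {i\<in>{1..m}. b i}) (Pi_pmf {1..m} False (\<lambda>i. bernoulli_pmf (p i)))"

primrec fedavg_pmf :: "nat \<Rightarrow> (nat \<Rightarrow> real) \<Rightarrow> real \<Rightarrow> nat \<Rightarrow> (nat \<Rightarrow> 'a::real_vector \<Rightarrow> 'a)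
    \<Rightarrow> 'a \<Rightarrow> nat \<Rightarrow> 'a pmf" where
  "fedavg_pmf m p eta s grad x0 0 = return_pmf x0"
| "fedavg_pmf m p eta s grad x0 (Suc t) =
     bind_pmf (fedavg_pmf m p eta s grad x0 t)
       (\<lambda>x. map_pmf (server_step eta s grad x) (active_pmf m p))"

end

theory Submission
  imports Defs
begin

(*
  For F_i(x) = |x - u_i|^2 / 2 the gradient is x - u_i, so s local steps send x to
  u_i + c (x - u_i) with c = (1 - eta)^s, and the server update is affine in x^t with
  coefficients that depend only on the active set A. Taking expectations,
  E x^(t+1) = r E x^t + (1 - c) sum_i w_i u_i, where q = prod_l (1 - p_l) is the probability
  that no uplink is active, r = c + q (1 - c) and w_i = E[1{i in A} / |A|]; since 0 <= r < 1,
  E x^t converges to sum_i w_i u_i / (1 - q).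

  It remains to evaluate w_i = p_i E[1 / (1 + |A - {i}|)]. For independent Bernoulli
  indicators, E f(|B|) = sum_S (prod_{z in S} p_z) (Delta^|S| f)(0) (Newton's forward
  difference expansion), and Delta^k (n |-> 1/(n+1)) (0) = (-1)^k / (k+1); grouping the
  subsets S by size gives the inclusion-exclusion formula.
*)

lemma has_derivative_half_norm_diff_sq:
  fixes u y :: "'a::real_inner"
  shows "((\<lambda>x. (1/2) * (norm (x - u))\<^sup>2) has_derivative (\<lambda>h. (y - u) \<bullet> h)) (at y)"
proof -
  have "((\<lambda>x. (1/2) * ((x - u) \<bullet> (x - u))) has_derivative
      (\<lambda>h. (1/2) * (h \<bullet> (y - u) + (y - u) \<bullet> h))) (at y)"
    by (rule derivative_eq_intros refl)+ (auto simp: inner_commute)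
  then show ?thesis
    unfolding power2_norm_eq_inner by (simp add: inner_commute)
qed

lemma gradient_half_norm_diff_sq_unique:
  fixes u y g :: "'a::real_inner"
  assumes "((\<lambda>x. (1/2) * (norm (x - u))\<^sup>2) has_derivative (\<lambda>h. g \<bullet> h)) (at y)"
  shows "g = y - u"
proof -
  have "(\<lambda>h. g \<bullet> h) = (\<lambda>h. (y - u) \<bullet> h)"
    using assms has_derivative_half_norm_diff_sq by (rule has_derivative_unique)
  then have "(g - (y - u)) \<bullet> (g - (y - u)) = 0"
    by (metis inner_diff_left right_minus_eq)
  then show ?thesis by simp
qed

lemma local_gd_quadratic:
  assumes "grad i = (\<lambda>y. y - u)"
  shows "local_gd eta s grad i x = u + (1 - eta) ^ s *\<^sub>R (x - u)"
  unfolding local_gd_def assms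
proof (induction s)
  case (Suc s)
  have "((\<lambda>y. y - eta *\<^sub>R (y - u)) ^^ Suc s) x
      = (u + (1 - eta) ^ s *\<^sub>R (x - u)) - eta *\<^sub>R ((u + (1 - eta) ^ s *\<^sub>R (x - u)) - u)"
    using Suc.IH by simp
  then show ?case by (simp add: algebra_simps)
qed simp

definition fwd_diff :: "(nat \<Rightarrow> 'a::ab_group_add) \<Rightarrow> nat \<Rightarrow> 'a" where
  "fwd_diff f n = f (Suc n) - f n"

lemma fwd_diff_funpow_inverse_Suc:
  "(fwd_diff ^^ k) (\<lambda>n. 1 / (real n + 1)) j = (-1) ^ k * fact k * fact j / fact (k + j + 1)"
proof (induction k arbitrary: j)
  case (Suc k)
  have "(fwd_diff ^^ Suc k) (\<lambda>n. 1 / (real n + 1)) j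
      = (-1) ^ k * fact k * (fact (Suc j) / fact (k + Suc j + 1) - fact j / fact (k + j + 1))"
    by (simp add: fwd_diff_def Suc.IH right_diff_distrib del: fact_Suc)
  also have "fact (Suc j) / fact (k + Suc j + 1) - fact j / fact (k + j + 1)
      = - (real k + 1) * fact j / fact (Suc k + j + 1)"
  proof -
    define F :: real where "F = fact (k + j + 1)"
    have F: "F > 0" unfolding F_def by simp
    have "fact (k + Suc j + 1) = (real k + real j + 2) * F"
      "fact (Suc k + j + 1) = (real k + real j + 2) * F" "fact (Suc j) = (real j + 1) * fact j"
      unfolding F_def by (simp_all add: algebra_simps)
    moreover have "real k + real j + 2 > 0" by simp
    ultimately show ?thesis
      unfolding F_def[symmetric] using F by (simp add: divide_simps) (simp add: algebra_simps)
  qed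
  finally show ?case by (simp add: field_simps)
qed simp

lemma sum_Pow_insert:
  assumes "finite J" "a \<notin> J"
  shows "(\<Sum>A\<in>Pow (insert a J). f A) = (\<Sum>A\<in>Pow J. f A) + (\<Sum>A\<in>Pow J. f (insert a A))"
proof -
  have "inj_on (insert a) (Pow J)"
    using assms(2) by (intro inj_onI) (metis PowD in_mono insert_ident)
  moreover have "Pow J \<inter> insert a ` Pow J = {}"
    using assms(2) by blast
  ultimately show ?thesis
    unfolding Pow_insert using assms(1) by (simp add: sum.union_disjoint sum.reindex)
qed

definition subset_prob :: "('a \<Rightarrow> 'b::comm_ring_1) \<Rightarrow> 'a set \<Rightarrow> 'a set \<Rightarrow> 'b" where
  "subset_prob p I A = (\<Prod>x\<in>I. if x \<in> A then p x else 1 - p x)"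

lemma subset_prob_insert_notin:
  assumes "finite J" "a \<notin> J" "A \<subseteq> J"
  shows "subset_prob p (insert a J) A = (1 - p a) * subset_prob p J A"
  using assms unfolding subset_prob_def by (subst prod.insert) auto

lemma subset_prob_insert_in:
  assumes "finite J" "a \<notin> J" "A \<subseteq> J"
  shows "subset_prob p (insert a J) (insert a A) = p a * subset_prob p J A"
  using assms unfolding subset_prob_def
  by (subst prod.insert) (auto intro!: arg_cong[where f = "(*) (p a)"] prod.cong)

lemma sum_subset_prob_card:
  fixes f :: "nat \<Rightarrow> 'b::comm_ring_1"
  assumes "finite J"
  shows "(\<Sum>A\<in>Pow J. subset_prob p J A * f (card A))
       = (\<Sum>S\<in>Pow J. prod p S * (fwd_diff ^^ card S) f 0)"
  using assms
proof (induction J arbitrary: f rule: finite_induct)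
  case empty
  then show ?case by (simp add: subset_prob_def)
next
  case (insert a J)
  have card_insert: "card (insert a A) = Suc (card A)" if "A \<in> Pow J" for A
    using that insert.hyps finite_subset by (subst card_insert_disjoint) auto
  have "(\<Sum>A\<in>Pow (insert a J). subset_prob p (insert a J) A * f (card A))
      = (\<Sum>A\<in>Pow J. (1 - p a) * (subset_prob p J A * f (card A)))
        + (\<Sum>A\<in>Pow J. p a * (subset_prob p J A * f (Suc (card A))))"
    unfolding sum_Pow_insert[OF insert.hyps]
    using subset_prob_insert_notin[OF insert.hyps, where p = p]
      subset_prob_insert_in[OF insert.hyps, where p = p] card_insert
    by (intro arg_cong2[where f = "(+)"] sum.cong) (auto simp: mult.assoc)
  also have "\<dots> = (\<Sum>A\<in>Pow J. subset_prob p J A * f (card A))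
        + p a * (\<Sum>A\<in>Pow J. subset_prob p J A * fwd_diff f (card A))"
    by (simp add: fwd_diff_def sum_distrib_left algebra_simps sum.distrib sum_subtractf)
  also have "\<dots> = (\<Sum>S\<in>Pow J. prod p S * (fwd_diff ^^ card S) f 0)
        + p a * (\<Sum>S\<in>Pow J. prod p S * (fwd_diff ^^ card S) (fwd_diff f) 0)"
    by (simp only: insert.IH)
  also have "p a * (\<Sum>S\<in>Pow J. prod p S * (fwd_diff ^^ card S) (fwd_diff f) 0)
      = (\<Sum>S\<in>Pow J. prod p (insert a S) * (fwd_diff ^^ card (insert a S)) f 0)"
    unfolding sum_distrib_left
  proof (intro sum.cong refl)
    fix S assume "S \<in> Pow J"
    then have "finite S" "a \<notin> S"
      using insert.hyps finite_subset by auto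
    then show "p a * (prod p S * (fwd_diff ^^ card S) (fwd_diff f) 0)
        = prod p (insert a S) * (fwd_diff ^^ card (insert a S)) f 0"
      by (simp add: funpow_Suc_right del: funpow.simps)
  qed
  finally show ?case
    unfolding sum_Pow_insert[OF insert.hyps] .
qed

lemma sum_subset_prob_inverse_card:
  fixes p :: "'a \<Rightarrow> real"
  assumes "finite I" "i \<in> I"
  shows "(\<Sum>A\<in>Pow I. subset_prob p I A * (if i \<in> A then 1 / real (card A) else 0))
       = p i * (\<Sum>S\<in>Pow (I - {i}). (-1) ^ card S * prod p S / (real (card S) + 1))"
proof -
  define J where "J = I - {i}"
  have J: "finite J" "i \<notin> J" and I: "I = insert i J"
    using assms unfolding J_def by auto
  have "(\<Sum>A\<in>Pow I. subset_prob p I A * (if i \<in> A then 1 / real (card A) else 0))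
      = (\<Sum>A\<in>Pow J. p i * (subset_prob p J A * (1 / (real (card A) + 1))))"
  proof -
    have "card (insert i A) = Suc (card A)" if "A \<in> Pow J" for A
      using that J finite_subset by (subst card_insert_disjoint) auto
    then show ?thesis
      unfolding I sum_Pow_insert[OF J] using J subset_prob_insert_in[OF J, where p = p]
      by (auto simp: add.commute intro!: sum.neutral sum.cong)
  qed
  also have "\<dots> = p i * (\<Sum>S\<in>Pow J. prod p S * (fwd_diff ^^ card S) (\<lambda>n. 1 / (real n + 1)) 0)"
    unfolding sum_distrib_left[symmetric]
    using sum_subset_prob_card[OF J(1), where p = p and f = "\<lambda>n. 1 / (real n + 1)"] by simp
  also have "\<dots> = p i * (\<Sum>S\<in>Pow J. (-1) ^ card S * prod p S / (real (card S) + 1))"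
    by (intro arg_cong[where f = "(*) (p i)"] sum.cong refl)
      (simp add: fwd_diff_funpow_inverse_Suc, simp add: ac_simps)
  finally show ?thesis
    unfolding J_def .
qed

lemma sum_Pow_alternating_inverse_card:
  fixes p :: "'a \<Rightarrow> real"
  assumes "finite J" "card J + 1 = m"
  shows "(\<Sum>S\<in>Pow J. (-1) ^ card S * prod p S / (real (card S) + 1))
       = 1 + (\<Sum>j\<in>{2..m}. (-1) ^ (j + 1) * (1 / real j) *
                (\<Sum>S\<in>{S. S \<subseteq> J \<and> card S = j - 1}. prod p S))"
proof -
  let ?h = "\<lambda>S. (-1) ^ card S * prod p S / (real (card S) + 1)"
  have "(\<lambda>S. card S + 1) ` Pow J \<subseteq> {1..m}"
    using assms card_mono by fastforce
  then have "(\<Sum>S\<in>Pow J. ?h S) = (\<Sum>j\<in>{1..m}. \<Sum>S\<in>{S. S \<in> Pow J \<and> card S + 1 = j}. ?h S)"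
    using assms(1) by (subst sum.group[symmetric]) auto
  also have "\<dots> = (\<Sum>j\<in>{1..m}. (-1) ^ (j + 1) * (1 / real j) *
                (\<Sum>S\<in>{S. S \<subseteq> J \<and> card S = j - 1}. prod p S))"
  proof (intro sum.cong refl)
    fix j assume j: "j \<in> {1..m}"
    then have "{S. S \<in> Pow J \<and> card S + 1 = j} = {S. S \<subseteq> J \<and> card S = j - 1}"
      by auto
    moreover have "(-1 :: real) ^ (j - 1) = (-1) ^ (j + 1)" "real (j - 1) + 1 = real j"
      using j by (auto simp: power_diff_conv_inverse)
    ultimately show "(\<Sum>S\<in>{S. S \<in> Pow J \<and> card S + 1 = j}. ?h S)
        = (-1) ^ (j + 1) * (1 / real j) * (\<Sum>S\<in>{S. S \<subseteq> J \<and> card S = j - 1}. prod p S)"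
      by (simp add: sum_distrib_left)
  qed
  also have "\<dots> = 1 + (\<Sum>j\<in>{2..m}. (-1) ^ (j + 1) * (1 / real j) *
                (\<Sum>S\<in>{S. S \<subseteq> J \<and> card S = j - 1}. prod p S))"
  proof -
    have "{1..m} = insert 1 {2..m}" "{S. S \<subseteq> J \<and> card S = 1 - 1} = {{}}"
      using assms finite_subset by fastforce+
    then show ?thesis by simp
  qed
  finally show ?thesis .
qed

lemma pmf_Pi_pmf_bernoulli:
  fixes p :: "'a \<Rightarrow> real"
  assumes "finite I" "\<And>i. i \<in> I \<Longrightarrow> 0 \<le> p i \<and> p i \<le> 1"
    and "b \<in> PiE_dflt I False (\<lambda>_. UNIV)"
  shows "pmf (Pi_pmf I False (\<lambda>i. bernoulli_pmf (p i))) b = subset_prob p I {i \<in> I. b i}"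
proof -
  have "pmf (Pi_pmf I False (\<lambda>i. bernoulli_pmf (p i))) b = (\<Prod>i\<in>I. pmf (bernoulli_pmf (p i)) (b i))"
    using assms(3) unfolding pmf_Pi[OF assms(1)] PiE_dflt_def by auto
  also have "\<dots> = subset_prob p I {i \<in> I. b i}"
    unfolding subset_prob_def using assms(2) by (intro prod.cong refl) auto
  finally show ?thesis .
qed

lemma expectation_active_pmf:
  fixes f :: "nat set \<Rightarrow> 'b::{banach, second_countable_topology}"
  assumes p: "\<And>i. i \<in> {1..m} \<Longrightarrow> 0 \<le> p i \<and> p i \<le> 1"
  shows "measure_pmf.expectation (active_pmf m p) f = (\<Sum>A\<in>Pow {1..m}. subset_prob p {1..m} A *\<^sub>R f A)"
proof -
  define I where "I = {1..m}"
  define M where "M = Pi_pmf I False (\<lambda>i. bernoulli_pmf (p i))"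
  define D where "D = PiE_dflt I False (\<lambda>_. UNIV :: bool set)"
  define g where "g b = {i \<in> I. b i}" for b :: "nat \<Rightarrow> bool"
  have I: "finite I"
    unfolding I_def by simp
  have "measure_pmf.expectation (active_pmf m p) f = measure_pmf.expectation M (\<lambda>b. f (g b))"
    unfolding active_pmf_def M_def g_def I_def integral_map_pmf ..
  also have "\<dots> = (\<Sum>b\<in>D. pmf M b *\<^sub>R f (g b))"
  proof (rule integral_measure_pmf)
    show "finite D"
      unfolding D_def using I by (intro finite_PiE_dflt) auto
    show "b \<in> D" if "b \<in> set_pmf M" for b
      using that set_Pi_pmf_subset[OF I, of False] unfolding M_def D_def PiE_dflt_def by auto
  qed
  also have "\<dots> = (\<Sum>b\<in>D. subset_prob p I (g b) *\<^sub>R f (g b))"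
    using pmf_Pi_pmf_bernoulli[OF I p[folded I_def]] unfolding M_def D_def g_def
    by (intro sum.cong refl) simp
  also have "\<dots> = (\<Sum>A\<in>Pow I. subset_prob p I A *\<^sub>R f A)"
  proof (rule sum.reindex_bij_betw)
    show "bij_betw g D (Pow I)"
      unfolding g_def D_def
      by (rule bij_betwI[of _ _ _ "\<lambda>B b. if b \<in> I then b \<in> B else False"]) (auto simp: PiE_dflt_def)
  qed
  finally show ?thesis
    unfolding I_def .
qed

lemma set_pmf_active_pmf: "set_pmf (active_pmf m p) \<subseteq> Pow {1..m}"
  unfolding active_pmf_def by auto

lemma finite_set_pmf_active_pmf: "finite (set_pmf (active_pmf m p))"
  by (rule finite_subset[OF set_pmf_active_pmf]) simp

lemma expectation_active_pmf_if_empty: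
  assumes p: "\<And>i. i \<in> {1..m} \<Longrightarrow> 0 \<le> p i \<and> p i \<le> 1"
  shows "measure_pmf.expectation (active_pmf m p) (\<lambda>A. if A = {} then 1 else c)
       = c + (\<Prod>l\<in>{1..m}. 1 - p l) * (1 - c)"
proof -
  have "(\<Sum>A\<in>Pow {1..m}. subset_prob p {1..m} A) = 1"
    using expectation_active_pmf[OF p, where f = "\<lambda>_. 1 :: real"] by simp
  moreover have "subset_prob p {1..m} {} = (\<Prod>l\<in>{1..m}. 1 - p l)"
    unfolding subset_prob_def by simp
  moreover have "measure_pmf.expectation (active_pmf m p) (\<lambda>A. if A = {} then 1 else c)
      = (\<Sum>A\<in>Pow {1..m}. subset_prob p {1..m} A * c
          + (if A = {} then subset_prob p {1..m} A * (1 - c) else 0))"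
    using expectation_active_pmf[OF p, where f = "\<lambda>A. if A = {} then 1 else c"]
    by (simp add: algebra_simps if_distrib cong: if_cong)
  ultimately show ?thesis
    by (simp add: sum.distrib sum_distrib_right[symmetric])
qed

definition active_weight :: "nat \<Rightarrow> (nat \<Rightarrow> real) \<Rightarrow> nat \<Rightarrow> real" where
  "active_weight m p i =
     measure_pmf.expectation (active_pmf m p) (\<lambda>A. if i \<in> A then 1 / real (card A) else 0)"

lemma active_weight_eq:
  assumes "\<And>i. i \<in> {1..m} \<Longrightarrow> 0 \<le> p i \<and> p i \<le> 1" "i \<in> {1..m}"
  shows "active_weight m p i = p i * (1 + (\<Sum>j\<in>{2..m}. (-1) ^ (j + 1) * (1 / real j) *
           (\<Sum>S\<in>{S. S \<subseteq> {1..m} - {i} \<and> card S = j - 1}. \<Prod>z\<in>S. p z)))"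
proof -
  have "active_weight m p i
      = (\<Sum>A\<in>Pow {1..m}. subset_prob p {1..m} A * (if i \<in> A then 1 / real (card A) else 0))"
    unfolding active_weight_def
    using expectation_active_pmf[OF assms(1), where f = "\<lambda>A. if i \<in> A then 1 / real (card A) else 0"]
    by simp
  also have "\<dots> = p i * (\<Sum>S\<in>Pow ({1..m} - {i}). (-1) ^ card S * prod p S / (real (card S) + 1))"
    using assms(2) by (intro sum_subset_prob_inverse_card) auto
  also have "card ({1..m} - {i}) + 1 = m"
    using assms(2) by simp
  then have "(\<Sum>S\<in>Pow ({1..m} - {i}). (-1) ^ card S * prod p S / (real (card S) + 1))
      = 1 + (\<Sum>j\<in>{2..m}. (-1) ^ (j + 1) * (1 / real j) *
           (\<Sum>S\<in>{S. S \<subseteq> {1..m} - {i} \<and> card S = j - 1}. \<Prod>z\<in>S. p z))"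
    by (intro sum_Pow_alternating_inverse_card) auto
  finally show ?thesis .
qed

lemma server_step_quadratic:
  assumes "finite A" "\<And>i. i \<in> A \<Longrightarrow> grad i = (\<lambda>y. y - u i)"
  shows "server_step eta s grad x A
       = (if A = {} then 1 else (1 - eta) ^ s) *\<^sub>R x
         + (1 - (1 - eta) ^ s) *\<^sub>R (\<Sum>i\<in>A. (1 / real (card A)) *\<^sub>R u i)"
proof (cases "A = {}")
  case False
  define c where "c = (1 - eta) ^ s"
  have "(\<Sum>i\<in>A. local_gd eta s grad i x) = (\<Sum>i\<in>A. c *\<^sub>R x + (1 - c) *\<^sub>R u i)"
    using assms(2) by (intro sum.cong refl) (auto simp: local_gd_quadratic c_def algebra_simps)
  also have "\<dots> = real (card A) *\<^sub>R c *\<^sub>R x + (1 - c) *\<^sub>R (\<Sum>i\<in>A. u i)"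
    by (simp add: sum.distrib scaleR_sum_right sum_constant_scaleR)
  finally show ?thesis
    using False assms(1) unfolding server_step_def c_def
    by (simp add: scaleR_add_right scaleR_sum_right)
qed (simp add: server_step_def)

lemma expectation_server_step_quadratic:
  fixes u :: "nat \<Rightarrow> 'a::euclidean_space"
  assumes grad: "\<And>i. i \<in> {1..m} \<Longrightarrow> grad i = (\<lambda>y. y - u i)"
    and p: "\<And>i. i \<in> {1..m} \<Longrightarrow> 0 \<le> p i \<and> p i \<le> 1"
  shows "measure_pmf.expectation (active_pmf m p) (server_step eta s grad x)
       = ((1 - eta) ^ s + (\<Prod>l\<in>{1..m}. 1 - p l) * (1 - (1 - eta) ^ s)) *\<^sub>R x
         + (1 - (1 - eta) ^ s) *\<^sub>R (\<Sum>i\<in>{1..m}. active_weight m p i *\<^sub>R u i)"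
proof -
  define c where "c = (1 - eta) ^ s"
  define weight where "weight i A = (if i \<in> A then 1 / real (card A) else 0)"
    for i :: nat and A :: "nat set"
  have affine: "server_step eta s grad x A
      = (if A = {} then 1 else c) *\<^sub>R x + (1 - c) *\<^sub>R (\<Sum>i\<in>{1..m}. weight i A *\<^sub>R u i)"
    if "A \<in> set_pmf (active_pmf m p)" for A
  proof -
    have A: "A \<subseteq> {1..m}"
      using that set_pmf_active_pmf by blast
    then have "(\<Sum>i\<in>A. (1 / real (card A)) *\<^sub>R u i) = (\<Sum>i\<in>{1..m}. weight i A *\<^sub>R u i)"
      unfolding weight_def by (intro sum.mono_neutral_cong_left) auto
    moreover have "finite A"
      using A by (rule finite_subset) simp
    ultimately show ?thesis
      using A grad unfolding c_def by (subst server_step_quadratic) auto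
  qed
  have map_eq: "map_pmf (server_step eta s grad x) (active_pmf m p)
      = map_pmf (\<lambda>A. (if A = {} then 1 else c) *\<^sub>R x
          + (1 - c) *\<^sub>R (\<Sum>i\<in>{1..m}. weight i A *\<^sub>R u i)) (active_pmf m p)"
    using affine by (rule map_pmf_cong[OF refl])
  have "measure_pmf.expectation (active_pmf m p) (server_step eta s grad x)
      = measure_pmf.expectation (active_pmf m p) (\<lambda>A. (if A = {} then 1 else c) *\<^sub>R x
          + (1 - c) *\<^sub>R (\<Sum>i\<in>{1..m}. weight i A *\<^sub>R u i))"
    using arg_cong[OF map_eq, where f = "\<lambda>M. measure_pmf.expectation M (\<lambda>y. y)"]
    by (simp only: integral_map_pmf)
  also have "\<dots> = measure_pmf.expectation (active_pmf m p) (\<lambda>A. if A = {} then 1 else c) *\<^sub>R x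
      + (1 - c) *\<^sub>R (\<Sum>i\<in>{1..m}. active_weight m p i *\<^sub>R u i)"
    by (simp add: integrable_measure_pmf_finite[OF finite_set_pmf_active_pmf] active_weight_def
        weight_def)
  also have "measure_pmf.expectation (active_pmf m p) (\<lambda>A. if A = {} then 1 else c)
      = c + (\<Prod>l\<in>{1..m}. 1 - p l) * (1 - c)"
    using p by (rule expectation_active_pmf_if_empty)
  finally show ?thesis
    unfolding c_def .
qed

lemma expectation_bind_pmf_affine:
  fixes M :: "'a::{banach, second_countable_topology} pmf"
  assumes "finite (set_pmf M)" "\<And>x. x \<in> set_pmf M \<Longrightarrow> finite (set_pmf (K x))"
    and "\<And>x. x \<in> set_pmf M \<Longrightarrow> measure_pmf.expectation (K x) (\<lambda>y. y) = r *\<^sub>R x + b"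
  shows "measure_pmf.expectation (bind_pmf M K) (\<lambda>y. y) = r *\<^sub>R measure_pmf.expectation M (\<lambda>y. y) + b"
proof -
  have "measure_pmf.expectation (bind_pmf M K) (\<lambda>y. y) = (\<Sum>a\<in>set_pmf M. pmf M a *\<^sub>R (r *\<^sub>R a + b))"
    using assms by (subst pmf_expectation_bind[OF assms(1)]) auto
  also have "\<dots> = r *\<^sub>R (\<Sum>a\<in>set_pmf M. pmf M a *\<^sub>R a) + (\<Sum>a\<in>set_pmf M. pmf M a) *\<^sub>R b"
    by (simp add: scaleR_add_right sum.distrib scaleR_sum_right scaleR_sum_left mult.commute)
  also have "(\<Sum>a\<in>set_pmf M. pmf M a) = 1"
    using assms(1) by (rule sum_pmf_eq_1) simp
  also have "(\<Sum>a\<in>set_pmf M. pmf M a *\<^sub>R a) = measure_pmf.expectation M (\<lambda>y. y)"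
    using assms(1) by (rule integral_measure_pmf[symmetric]) simp
  finally show ?thesis by simp
qed

lemma finite_set_pmf_fedavg_pmf: "finite (set_pmf (fedavg_pmf m p eta s grad x0 t))"
  by (induction t) (simp_all add: finite_set_pmf_active_pmf)

lemma LIMSEQ_affine_iteration:
  fixes x :: "nat \<Rightarrow> 'a::real_normed_vector"
  assumes "x 0 = 0" "\<And>t. x (Suc t) = r *\<^sub>R x t + b" "\<bar>r\<bar> < 1"
  shows "x \<longlonglongrightarrow> (1 / (1 - r)) *\<^sub>R b"
proof -
  define L where "L = (1 / (1 - r)) *\<^sub>R b"
  have "r \<noteq> 1"
    using assms(3) by auto
  then have b: "b = (1 - r) *\<^sub>R L"
    unfolding L_def by simp
  have closed_form: "x t = (1 - r ^ t) *\<^sub>R L" for t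
  proof (induction t)
    case (Suc t)
    show ?case
      unfolding assms(2) Suc b by (simp add: algebra_simps)
  qed (simp add: assms(1))
  have "(\<lambda>t. (1 - r ^ t) *\<^sub>R L) \<longlonglongrightarrow> (1 - 0) *\<^sub>R L"
    using assms(3) by (intro tendsto_intros) auto
  then show ?thesis
    unfolding closed_form L_def by simp
qed

lemma prod_one_minus_less_one:
  fixes p :: "'a \<Rightarrow> real"
  assumes "finite I" "i \<in> I" "0 < p i" "\<And>l. l \<in> I \<Longrightarrow> 0 \<le> p l \<and> p l \<le> 1"
  shows "(\<Prod>l\<in>I. 1 - p l) < 1"
proof -
  have "(\<Prod>l\<in>I. 1 - p l) = (1 - p i) * (\<Prod>l\<in>I - {i}. 1 - p l)"
    using assms(1,2) by (rule prod.remove)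
  also have "\<dots> \<le> (1 - p i) * 1"
    using assms(2,4) by (intro mult_left_mono prod_le_1) auto
  also have "\<dots> < 1"
    using assms(3) by simp
  finally show ?thesis .
qed

lemma LIMSEQ_expectation_fedavg_pmf_quadratic:
  fixes u :: "nat \<Rightarrow> 'a::euclidean_space"
  assumes grad: "\<And>i. i \<in> {1..m} \<Longrightarrow> grad i = (\<lambda>y. y - u i)"
    and p: "\<And>i. i \<in> {1..m} \<Longrightarrow> 0 \<le> p i \<and> p i \<le> 1"
    and q: "(\<Prod>l\<in>{1..m}. 1 - p l) < 1"
    and eta: "0 < eta" "eta < 1" and s: "s \<ge> 1"
  shows "(\<lambda>T. measure_pmf.expectation (fedavg_pmf m p eta s grad 0 T) (\<lambda>x. x))
     \<longlonglongrightarrow> (\<Sum>i\<in>{1..m}. (active_weight m p i / (1 - (\<Prod>l\<in>{1..m}. 1 - p l))) *\<^sub>R u i)"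
proof -
  define c where "c = (1 - eta) ^ s"
  define q where "q = (\<Prod>l\<in>{1..m}. 1 - p l)"
  define b where "b = (1 - c) *\<^sub>R (\<Sum>i\<in>{1..m}. active_weight m p i *\<^sub>R u i)"
  have "0 \<le> c" "c < 1"
    unfolding c_def using eta s by (simp_all add: power_less_one_iff)
  moreover have "0 \<le> q"
    unfolding q_def using p by (intro prod_nonneg) auto
  ultimately have c_q: "0 < (1 - c) * (1 - q)" "0 \<le> c + q * (1 - c)"
    using q unfolding q_def by simp_all
  have "(\<lambda>T. measure_pmf.expectation (fedavg_pmf m p eta s grad 0 T) (\<lambda>x. x))
      \<longlonglongrightarrow> (1 / (1 - (c + q * (1 - c)))) *\<^sub>R b"
  proof (rule LIMSEQ_affine_iteration)
    show "measure_pmf.expectation (fedavg_pmf m p eta s grad 0 (Suc t)) (\<lambda>x. x)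
        = (c + q * (1 - c)) *\<^sub>R measure_pmf.expectation (fedavg_pmf m p eta s grad 0 t) (\<lambda>x. x) + b"
      for t
      unfolding fedavg_pmf.simps
    proof (rule expectation_bind_pmf_affine)
      show "measure_pmf.expectation (map_pmf (server_step eta s grad x) (active_pmf m p)) (\<lambda>y. y)
          = (c + q * (1 - c)) *\<^sub>R x + b" for x
        unfolding integral_map_pmf c_def q_def b_def
        by (rule expectation_server_step_quadratic[OF grad p])
    qed (simp_all add: finite_set_pmf_fedavg_pmf finite_set_pmf_active_pmf)
    show "\<bar>c + q * (1 - c)\<bar> < 1"
      using c_q by (simp add: algebra_simps)
  qed simp
  moreover have "(1 / (1 - (c + q * (1 - c)))) *\<^sub>R b
      = (\<Sum>i\<in>{1..m}. (active_weight m p i / (1 - q)) *\<^sub>R u i)"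
  proof -
    have "1 - (c + q * (1 - c)) = (1 - c) * (1 - q)"
      by (simp add: algebra_simps)
    then show ?thesis
      unfolding b_def scaleR_sum_right scaleR_scaleR using c_q by (intro sum.cong refl) auto
  qed
  ultimately show ?thesis
    unfolding q_def by simp
qed

theorem proposition1:
  fixes m s :: nat and u :: "nat \<Rightarrow> real ^ 'd" and p :: "nat \<Rightarrow> real" and eta :: real
    and grad :: "nat \<Rightarrow> real ^ 'd \<Rightarrow> real ^ 'd"
  assumes m: "m \<ge> 1"
    and grad: "\<And>i y. i \<in> {1..m} \<Longrightarrow>
       ((\<lambda>x. (1/2) * (norm (x - u i))\<^sup>2) has_derivative (\<lambda>h. grad i y \<bullet> h)) (at y)"
    and eta: "0 < eta" "eta < 1"
    and s: "s \<ge> 1"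
    and p: "\<And>i. i \<in> {1..m} \<Longrightarrow> 0 < p i \<and> p i \<le> 1"
  shows "(\<lambda>T. measure_pmf.expectation (fedavg_pmf m p eta s grad 0 T) (\<lambda>x. x))
     \<longlonglongrightarrow> (\<Sum>i\<in>{1..m}.
           ((p i * (1 + (\<Sum>j\<in>{2..m}. (-1) ^ (j + 1) * (1 / real j) *
                (\<Sum>S\<in>{S. S \<subseteq> {1..m} - {i} \<and> card S = j - 1}. \<Prod>z\<in>S. p z))))
            / (1 - (\<Prod>l\<in>{1..m}. 1 - p l))) *\<^sub>R u i)"
proof -
  have p01: "\<And>i. i \<in> {1..m} \<Longrightarrow> 0 \<le> p i \<and> p i \<le> 1"
    using p by fastforce
  have grad_eq: "grad i = (\<lambda>y. y - u i)" if "i \<in> {1..m}" for i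
    using gradient_half_norm_diff_sq_unique[OF grad[OF that]] by blast
  have "(\<Prod>l\<in>{1..m}. 1 - p l) < 1"
    using m p01 p[of 1] by (intro prod_one_minus_less_one[of _ 1]) auto
  with grad_eq p01 eta s have "(\<lambda>T. measure_pmf.expectation (fedavg_pmf m p eta s grad 0 T) (\<lambda>x. x))
      \<longlonglongrightarrow> (\<Sum>i\<in>{1..m}. (active_weight m p i / (1 - (\<Prod>l\<in>{1..m}. 1 - p l))) *\<^sub>R u i)"
    by (intro LIMSEQ_expectation_fedavg_pmf_quadratic)
  also have "(\<Sum>i\<in>{1..m}. (active_weight m p i / (1 - (\<Prod>l\<in>{1..m}. 1 - p l))) *\<^sub>R u i)
      = (\<Sum>i\<in>{1..m}.
           ((p i * (1 + (\<Sum>j\<in>{2..m}. (-1) ^ (j + 1) * (1 / real j) *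
                (\<Sum>S\<in>{S. S \<subseteq> {1..m} - {i} \<and> card S = j - 1}. \<Prod>z\<in>S. p z))))
            / (1 - (\<Prod>l\<in>{1..m}. 1 - p l))) *\<^sub>R u i)"
    using active_weight_eq[OF p01] by (intro sum.cong) auto
  finally show ?thesis .
qed

end
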